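(* Let $n\ge1$ and $0<\alpha<2$. For $0<h<1$ let $\mathcal{T}(h)=\sum_{\vec{k}\in\mathbb{Z}^n}h^n\delta_{h\vec{k}}$ and $\mathcal{S}(h)=\sum_{\vec{k}\neq\vec{j}}h^{2n}\frac{1}{|h\vec{k}-h\vec{j}|^{n+\alpha}}\delta_{(h\vec{k},h\vec{j})}$, the sum over $\vec{k},\vec{j}\in\mathbb{Z}^n$. Let $\Phi\in\mathscr{C}_c^\infty(\mathbb{R}^n\times\mathbb{R}^n)$ with $\Phi(x,x)=0$ for all $x$. For each $h$ let $\psi_h:h\mathbb{Z}^n\to\mathbb{R}$ satisfy $\int\varphi\psi_h\,d\mathcal{T}(h)=\iint\varphi(x)\Phi(x,y)\,d\mathcal{S}(h)(x,y)$ for all $\varphi\in\mathscr{C}_c(\mathbb{R}^n)$, and set $\mathcal{Q}(\Phi,h)=\sum_{\vec{k}}\psi_h(h\vec{k})\mathcal{X}_{Q(h\vec{k})}$ with $Q(h\vec{k})=\prod_{m=1}^n[hk_m,h(k_m+1))$. Then for every $\varphi\in\mathscr{C}_c(\mathbb{R}^n)$, $$\lim_{h\to0^+}\int_{\mathbb{R}^n}\mathcal{Q}(\Phi,h)\varphi\,dx=\int_{\mathbb{R}^n}\varphi(x)\,(-\Delta)_y^{\alpha/2}\Phi(x,x)\,dx,$$ that is, $\frac{d\mathcal{S}}{d\mathcal{T}}(\Phi)=(-\Delta)_y^{\alpha/2}\Phi(x,x)$.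
   Context: Here $(-\Delta)_y^{\alpha/2}\Phi(x,x)$ denotes $\lim_{\varepsilon\to0^+}\int_{\{y:|x-y|>\varepsilon\}}\frac{\Phi(x,y)-\Phi(x,x)}{|x-y|^{n+\alpha}}\,dy$ (the paper's convention, without normalizing constant). $\delta_p$ is the unit point mass at $p$. $\frac{d\mathcal{S}}{d\mathcal{T}}(\Phi)$ is the limit as $h\to0^+$, tested against $\varphi\in\mathscr{C}_c(\mathbb{R}^n)$ with Lebesgue measure, of the piecewise-constant quotients $\mathcal{Q}(\Phi,h)$ defined from the Kirchhoff divergence $\psi_h$. *)

theory Defs
  imports "HOL-Analysis.Analysis"
begin

text \<open>C-infinity: there is a family of functions containing f, closed under
  taking directional (Frechet) derivatives, all of whose members are
  differentiable everywhere.  Equivalently: all iterated derivatives exist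
  (and are hence continuous).\<close>
definition smooth_fun :: "('a::euclidean_space \<Rightarrow> real) \<Rightarrow> bool" where
  "smooth_fun f \<longleftrightarrow> (\<exists>F. f \<in> F \<and>
     (\<forall>g\<in>F. (\<forall>x. g differentiable (at x)) \<and>
              (\<forall>v. (\<lambda>x. frechet_derivative g (at x) v) \<in> F)))"

definition compact_support :: "('a::real_normed_vector \<Rightarrow> real) \<Rightarrow> bool" where
  "compact_support f \<longleftrightarrow> compact (closure {x. f x \<noteq> 0})"

definition Cc :: "('a::euclidean_space \<Rightarrow> real) set" where
  "Cc = {f. continuous_on UNIV f \<and> compact_support f}"

definition Cc_inf :: "('a::euclidean_space \<Rightarrow> real) set" where
  "Cc_inf = {f. smooth_fun f \<and> compact_support f}"

definition latt :: "real \<Rightarrow> int^'n \<Rightarrow> real^'n" where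
  "latt h k = (\<chi> i. h * of_int (k $ i))"

definition cube :: "real \<Rightarrow> int^'n \<Rightarrow> (real^'n) set" where
  "cube h k = {x. \<forall>i. h * of_int (k $ i) \<le> x $ i \<and> x $ i < h * (of_int (k $ i) + 1)}"

text \<open>piecewise-constant quotient Q(Phi,h) = sum_k psi_h(h k) * indicator of Q(h k),
  where psi h k stands for psi_h(h k)\<close>
definition Qpc :: "(int^'n \<Rightarrow> real) \<Rightarrow> real \<Rightarrow> real^'n \<Rightarrow> real" where
  "Qpc psi h x = (\<Sum>\<^sub>\<infinity>k. psi k * indicator (cube h k) x)"

text \<open>fractional Laplacian in y evaluated on the diagonal (no normalizing constant),
  as a principal value\<close>
definition frac_lap_diag :: "real \<Rightarrow> ((real^'n) \<times> (real^'n) \<Rightarrow> real) \<Rightarrow> real^'n \<Rightarrow> real" where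
  "frac_lap_diag \<alpha> \<Phi> x = Lim (at_right 0)
     (\<lambda>\<epsilon>. LINT y:{y. dist x y > \<epsilon>}|lborel.
        (\<Phi> (x, y) - \<Phi> (x, x)) / norm (x - y) powr (real CARD('n) + \<alpha>))"

end

theory Submission
  imports Defs
begin

text \<open>Testing the defining identity of \<open>\<psi>\<^sub>h\<close> with a continuous function that equals 1 at
  \<open>hk\<close> and 0 at the other lattice points gives
  \<open>\<psi>\<^sub>h(hk) = h^n \<Sum>\<^bsub>m \<noteq> 0\<^esub> \<Phi>(hk, hk + hm) / |hm| powr (n + \<alpha>)\<close>. Pairing \<open>m\<close> with \<open>-m\<close>, this
  is the integral of a step function approximating the even kernel
  \<open>(\<Phi>(x, x + z) + \<Phi>(x, x - z)) / (2 |z| powr (n + \<alpha>))\<close>, and the substitutions \<open>y = x \<plusminus> z\<close>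
  identify the principal value defining the fractional Laplacian with the integral of the same
  kernel. Since \<open>\<Phi>\<close> is smooth and vanishes on the diagonal, its second differences are
  \<open>O(|z|^2)\<close>, so both kernels are dominated on a ball by \<open>C (1 + |z| powr (2 - n - \<alpha>))\<close>, which
  is integrable because \<open>\<alpha> < 2\<close>. Dominated convergence, first in \<open>z\<close> and then in \<open>x\<close>, gives
  the theorem.\<close>

section \<open>Lattice cubes and step functions\<close>

definition cube_index :: "real \<Rightarrow> real^'n \<Rightarrow> int^'n" where
  "cube_index h x = (\<chi> i. \<lfloor>x $ i / h\<rfloor>)"

lemma mem_cube_iff: "0 < h \<Longrightarrow> x \<in> cube h k \<longleftrightarrow> cube_index h x = k"
  by (simp add: cube_def cube_index_def vec_eq_iff floor_eq_iff pos_le_divide_eq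
      pos_divide_less_eq mult.commute)

lemma Qpc_eq: "0 < h \<Longrightarrow> Qpc g h x = g (cube_index h x)"
  unfolding Qpc_def by (subst infsum_cong_neutral[where T = "{cube_index h x}"])
    (auto simp: mem_cube_iff indicator_def)

lemma latt_zero: "latt h 0 = 0"
  and latt_add: "latt h (a + b) = latt h a + latt h b"
  and latt_diff: "latt h (a - b) = latt h a - latt h b"
  and latt_minus: "latt h (- a) = - latt h a"
  by (simp_all add: latt_def vec_eq_iff algebra_simps)

lemma norm_latt_ge:
  assumes "m \<noteq> 0" "0 < h" shows "h \<le> norm (latt h m)"
proof -
  obtain i where "m $ i \<noteq> 0" using assms(1) by (auto simp: vec_eq_iff)
  then have "h \<le> \<bar>h * real_of_int (m $ i)\<bar>"
    using assms(2) by (simp add: abs_mult)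
  also have "\<dots> \<le> norm (latt h m)"
    using component_le_norm_cart[of "latt h m" i] by (simp add: latt_def)
  finally show ?thesis .
qed

lemma finite_latt_cball:
  assumes "0 < h" shows "finite {m :: int^'n. norm (latt h m) \<le> R}"
proof -
  define N where "N = \<lceil>R / h\<rceil>"
  have "{m :: int^'n. norm (latt h m) \<le> R} \<subseteq> vec_lambda ` (PiE UNIV (\<lambda>_. {-N..N}))"
  proof
    fix m :: "int^'n" assume m: "m \<in> {m. norm (latt h m) \<le> R}"
    have "\<bar>m $ i\<bar> \<le> N" for i
    proof -
      have "\<bar>h * real_of_int (m $ i)\<bar> \<le> R"
        using component_le_norm_cart[of "latt h m" i] m by (simp add: latt_def)
      then have "\<bar>real_of_int (m $ i)\<bar> \<le> R / h"
        using assms by (simp add: abs_mult pos_le_divide_eq mult.commute)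
      then show ?thesis unfolding N_def by linarith
    qed
    then have "(\<lambda>i. m $ i) \<in> PiE UNIV (\<lambda>_. {-N..N})" by (auto simp: abs_le_iff minus_le_iff)
    then show "m \<in> vec_lambda ` (PiE UNIV (\<lambda>_. {-N..N}))"
      by (metis image_eqI vec_lambda_eta)
  qed
  then show ?thesis by (rule finite_subset) (intro finite_imageI finite_PiE; simp)
qed

lemma norm_latt_cube_index_le:
  fixes x :: "real^'n"
  assumes "0 < h" shows "norm (latt h (cube_index h x) - x) \<le> real CARD('n) * h"
proof -
  have "\<bar>(latt h (cube_index h x) - x) $ i\<bar> \<le> h" for i
  proof -
    have fl: "real_of_int \<lfloor>x $ i / h\<rfloor> \<le> x $ i / h" "x $ i / h < real_of_int \<lfloor>x $ i / h\<rfloor> + 1"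
      by linarith+
    have "h * real_of_int \<lfloor>x $ i / h\<rfloor> \<le> x $ i"
      using mult_left_mono[OF fl(1), of h] assms by simp
    moreover have "x $ i < h * real_of_int \<lfloor>x $ i / h\<rfloor> + h"
      using mult_strict_left_mono[OF fl(2) assms] assms by (simp add: algebra_simps)
    ultimately show ?thesis by (simp add: latt_def cube_index_def abs_le_iff)
  qed
  then have "(\<Sum>i\<in>UNIV. \<bar>(latt h (cube_index h x) - x) $ i\<bar>) \<le> real CARD('n) * h"
    using sum_mono[of UNIV "\<lambda>i. \<bar>(latt h (cube_index h x) - x) $ i\<bar>" "\<lambda>_. h"] by simp
  then show ?thesis using norm_le_l1_cart order_trans by blast
qed

lemma tendsto_latt_cube_index:
  fixes x :: "real^'n"
  assumes "\<And>n. 0 < S n" "S \<longlonglongrightarrow> 0"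
  shows "(\<lambda>n. latt (S n) (cube_index (S n) x)) \<longlonglongrightarrow> x"
proof -
  have "(\<lambda>n. latt (S n) (cube_index (S n) x) - x) \<longlonglongrightarrow> 0"
  proof (rule Lim_null_comparison)
    show "\<forall>\<^sub>F n in sequentially. norm (latt (S n) (cube_index (S n) x) - x) \<le> real CARD('n) * S n"
      by (intro always_eventually allI norm_latt_cube_index_le assms(1))
    show "(\<lambda>n. real CARD('n) * S n) \<longlonglongrightarrow> 0"
      using tendsto_mult_right_zero[OF assms(2)] by simp
  qed
  then show ?thesis by (simp add: LIM_zero_iff)
qed

lemma sets_cube [measurable]: "cube h (k :: int^'n) \<in> sets borel"
proof -
  have "cube h k = (\<Inter>i. {x. h * of_int (k $ i) \<le> x $ i} \<inter> {x. x $ i < h * (of_int (k $ i) + 1)})"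
    by (auto simp: cube_def)
  also have "\<dots> \<in> sets borel"
    by (intro sets.countable_INT' sets.Int borel_closed borel_open closed_Collect_le
        open_Collect_less continuous_intros) auto
  finally show ?thesis .
qed

lemma borel_measurable_step:
  assumes "0 < h" shows "(\<lambda>x. g (cube_index h x :: int^'n) :: real) \<in> borel_measurable lborel"
proof -
  have "cube_index h \<in> borel \<rightarrow>\<^sub>M count_space (UNIV :: (int^'n) set)"
  proof (subst measurable_count_space_eq_countable, safe)
    fix k :: "int^'n"
    have "cube_index h -` {k} \<inter> space borel = cube h k" using mem_cube_iff[OF assms] by auto
    then show "cube_index h -` {k} \<inter> space borel \<in> sets borel" by simp
  qed simp_all
  then show ?thesis by (simp add: measurable_compose[where N = "count_space UNIV"])
qed

lemma emeasure_cube: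
  assumes "0 < h" shows "emeasure lborel (cube h (k :: int^'n)) = ennreal (h ^ CARD('n))"
proof -
  define a where "a = latt h k"
  define b where "b = a + (\<chi> i. h :: real^'n)"
  have Basis: "(b - a) \<bullet> c = h" if "c \<in> Basis" for c
    using that by (auto simp: b_def Basis_vec_def inner_axis)
  then have le: "a \<bullet> c \<le> b \<bullet> c" if "c \<in> Basis" for c
    using that assms by (metis inner_diff_left diff_ge_0_iff_ge less_imp_le)
  have "prod ((\<bullet>) (b - a)) Basis = h ^ CARD('n)"
    using Basis by (simp add: DIM_cart)
  moreover have "box a b \<subseteq> cube h k" "cube h k \<subseteq> cbox a b"
    by (auto simp: mem_box_cart cube_def a_def b_def latt_def algebra_simps less_imp_le)
  then have "emeasure lborel (box a b) \<le> emeasure lborel (cube h k)"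
    "emeasure lborel (cube h k) \<le> emeasure lborel (cbox a b)"
    by (auto intro!: emeasure_mono)
  ultimately show ?thesis
    using emeasure_lborel_box[OF le] emeasure_lborel_cbox[OF le] by simp
qed

lemma has_bochner_integral_step:
  fixes g :: "int^'n \<Rightarrow> real"
  assumes "0 < h" "finite S" "\<And>m. m \<notin> S \<Longrightarrow> g m = 0"
  shows "has_bochner_integral lborel (\<lambda>x. g (cube_index h x)) (h ^ CARD('n) * (\<Sum>m\<in>S. g m))"
proof -
  have step: "g (cube_index h x) = (\<Sum>m\<in>S. g m * indicator (cube h m) x)" for x
    using assms by (cases "cube_index h x \<in> S")
      (auto simp: indicator_def mem_cube_iff sum.delta')
  have "has_bochner_integral lborel (indicator (cube h m)) (measure lborel (cube h m))" for m
    by (intro has_bochner_integral_real_indicator)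
      (auto simp: emeasure_cube[OF assms(1)])
  then have "has_bochner_integral lborel (\<lambda>x. \<Sum>m\<in>S. g m * indicator (cube h m) x)
      (\<Sum>m\<in>S. g m * measure lborel (cube h m))"
    by (intro has_bochner_integral_sum has_bochner_integral_mult_right)
  moreover have "measure lborel (cube h m) = h ^ CARD('n)" for m :: "int^'n"
    using emeasure_cube[OF assms(1), of m] assms(1) by (simp add: measure_def)
  ultimately show ?thesis by (simp add: step sum_distrib_right mult.commute)
qed

lemma Cc_latt_indicator:
  assumes "0 < h"
  obtains \<phi> :: "real^'n \<Rightarrow> real" where "\<phi> \<in> Cc" "\<And>j. \<phi> (latt h j) = (if j = k then 1 else 0)"
proof
  define \<phi> where "\<phi> y = max 0 (1 - 2 * dist y (latt h k) / h)" for y :: "real^'n"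
  have "{y. \<phi> y \<noteq> 0} \<subseteq> cball (latt h k) h"
  proof
    fix y assume "y \<in> {y. \<phi> y \<noteq> 0}"
    then have "2 * dist y (latt h k) / h < 1" by (auto simp: \<phi>_def)
    then show "y \<in> cball (latt h k) h" using assms by (simp add: dist_commute field_simps)
  qed
  then have "compact (closure {y. \<phi> y \<noteq> 0})"
    by (meson bounded_cball bounded_subset compact_closure)
  moreover have "continuous_on UNIV \<phi>"
    unfolding \<phi>_def using assms by (intro continuous_intros) auto
  ultimately show "\<phi> \<in> Cc" by (simp add: Cc_def compact_support_def)
  fix j :: "int^'n"
  show "\<phi> (latt h j) = (if j = k then 1 else 0)"
  proof (cases "j = k")
    case False
    then have "h \<le> dist (latt h j) (latt h k)"
      using norm_latt_ge[of "j - k" h] assms by (simp add: latt_diff dist_norm)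
    then show ?thesis using False assms by (simp add: \<phi>_def le_divide_eq)
  qed (simp add: \<phi>_def)
qed

section \<open>Functions with compact support\<close>

lemma
  fixes \<phi> :: "'a::euclidean_space \<Rightarrow> real"
  assumes "\<phi> \<in> Cc"
  shows integrable_Cc: "integrable lborel \<phi>"
    and borel_measurable_Cc: "\<phi> \<in> borel_measurable borel"
proof -
  define K where "K = closure {x. \<phi> x \<noteq> 0}"
  have K: "compact K" and c: "continuous_on UNIV \<phi>"
    using assms by (auto simp: Cc_def compact_support_def K_def)
  have "indicator K x *\<^sub>R \<phi> x = \<phi> x" for x
    using closure_subset[of "{x. \<phi> x \<noteq> 0}"] by (cases "\<phi> x = 0") (auto simp: K_def)
  then have "(\<lambda>x. indicator K x *\<^sub>R \<phi> x) = \<phi>" by (rule ext)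
  then show "integrable lborel \<phi>"
    using borel_integrable_compact[OF K continuous_on_subset[OF c]] by simp
  show "\<phi> \<in> borel_measurable borel" by (rule borel_measurable_continuous_onI[OF c])
qed

abbreviation fderiv :: "('a::real_normed_vector \<Rightarrow> real) \<Rightarrow> 'a \<Rightarrow> 'a \<Rightarrow> real" where
  "fderiv g p \<equiv> frechet_derivative g (at p)"

lemma smooth_fun_has_derivative: "smooth_fun f \<Longrightarrow> (f has_derivative fderiv f x) (at x)"
  unfolding smooth_fun_def using frechet_derivative_works by blast

lemma smooth_fun_continuous: "smooth_fun f \<Longrightarrow> continuous_on UNIV f"
  by (metis continuous_at_imp_continuous_on has_derivative_continuous smooth_fun_has_derivative)

lemma smooth_fun_directional_derivative:
  "smooth_fun f \<Longrightarrow> smooth_fun (\<lambda>x. fderiv f x v)"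
  unfolding smooth_fun_def by blast

lemma fderiv_eq_0_outside_support:
  fixes g :: "'a::real_normed_vector \<Rightarrow> real"
  assumes "\<And>x. (g has_derivative fderiv g x) (at x)" "p \<notin> closure {x. g x \<noteq> 0}"
  shows "fderiv g p = (\<lambda>_. 0)"
proof (rule has_derivative_unique)
  define U where "U = - closure {x. g x \<noteq> 0}"
  have U: "open U" "p \<in> U" using assms(2) by (auto simp: U_def)
  have "g x = 0" if "x \<in> U" for x
    using that closure_subset by (force simp: U_def)
  then show "((\<lambda>_. 0) has_derivative fderiv g p) (at p)"
    using has_derivative_transform_within_open[OF assms(1) U, of "\<lambda>_. 0"] by simp
qed simp

lemma compact_support_directional_derivative:
  assumes "smooth_fun f" "compact_support f"
  shows "compact_support (\<lambda>x. fderiv f x v)"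
proof -
  have "{x. fderiv f x v \<noteq> 0} \<subseteq> closure {x. f x \<noteq> 0}"
    using fderiv_eq_0_outside_support[OF smooth_fun_has_derivative[OF assms(1)]] by force
  then have "closure {x. fderiv f x v \<noteq> 0} \<subseteq> closure {x. f x \<noteq> 0}"
    by (simp add: closure_minimal)
  then have "closure {x. f x \<noteq> 0} \<inter> closure {x. fderiv f x v \<noteq> 0} = closure {x. fderiv f x v \<noteq> 0}"
    by blast
  moreover have "compact (closure {x. f x \<noteq> 0} \<inter> closure {x. fderiv f x v \<noteq> 0})"
    using assms(2) by (intro compact_Int_closed) (auto simp: compact_support_def)
  ultimately show ?thesis unfolding compact_support_def by metis
qed

lemma bounded_compact_support:
  assumes "continuous_on UNIV g" "compact_support g"
  shows "\<exists>B\<ge>0. \<forall>x. \<bar>g x\<bar> \<le> B"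
proof -
  define K where "K = closure {x. g x \<noteq> 0}"
  have "compact (g ` K)"
    using assms by (auto simp: K_def compact_support_def intro: compact_continuous_image continuous_on_subset)
  then have "bounded (g ` K)" by (rule compact_imp_bounded)
  then obtain B where "\<And>y. y \<in> g ` K \<Longrightarrow> norm y \<le> B"
    unfolding bounded_iff by blast
  then have B: "\<And>x. x \<in> K \<Longrightarrow> \<bar>g x\<bar> \<le> B" by auto
  have "\<bar>g x\<bar> \<le> max B 0" for x
    using B[of x] closure_subset[of "{x. g x \<noteq> 0}"] by (cases "g x = 0") (auto simp: K_def)
  then show ?thesis by (intro exI[of _ "max B 0"]) auto
qed

lemma abs_linear_le:
  fixes L :: "'a::euclidean_space \<Rightarrow> real"
  assumes "linear L" "\<And>c. c \<in> Basis \<Longrightarrow> \<bar>L c\<bar> \<le> B c"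
  shows "\<bar>L y\<bar> \<le> (\<Sum>c\<in>Basis. B c) * norm y"
proof -
  have "\<bar>L y\<bar> = \<bar>\<Sum>c\<in>Basis. (y \<bullet> c) * L c\<bar>"
    using Linear_Algebra.linear_componentwise[OF assms(1), of y 1] by simp
  also have "\<dots> \<le> (\<Sum>c\<in>Basis. norm y * B c)"
    by (intro order.trans[OF sum_abs] sum_mono)
      (auto simp: abs_mult intro!: mult_mono Basis_le_norm assms(2) order.trans[OF abs_ge_zero])
  finally show ?thesis by (simp add: sum_distrib_left mult.commute)
qed

lemma lipschitz_smooth_compact_support:
  fixes g :: "'a::euclidean_space \<Rightarrow> real"
  assumes "smooth_fun g" "compact_support g"
  shows "\<exists>L\<ge>0. \<forall>p q. \<bar>g p - g q\<bar> \<le> L * norm (p - q)"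
proof -
  have "\<exists>B\<ge>0. \<forall>x. \<bar>fderiv g x c\<bar> \<le> B" for c
    using assms by (intro bounded_compact_support smooth_fun_continuous
        smooth_fun_directional_derivative compact_support_directional_derivative)
  then obtain B where B: "\<And>c. 0 \<le> B c" "\<And>c x. \<bar>fderiv g x c\<bar> \<le> B c" by metis
  have "norm (g p - g q) \<le> (\<Sum>c\<in>Basis. B c) * norm (p - q)" for p q
  proof (rule differentiable_bound[OF convex_UNIV])
    fix x
    show "(g has_derivative fderiv g x) (at x within UNIV)"
      using smooth_fun_has_derivative[OF assms(1)] by simp
    have "linear (fderiv g x)"
      using smooth_fun_has_derivative[OF assms(1)] by (rule has_derivative_linear)
    show "onorm (fderiv g x) \<le> (\<Sum>c\<in>Basis. B c)"
    proof (rule onorm_le)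
      show "norm (fderiv g x y) \<le> (\<Sum>c\<in>Basis. B c) * norm y" for y
        using abs_linear_le[OF \<open>linear (fderiv g x)\<close>] B(2) by simp
    qed
  qed simp_all
  then show ?thesis using B(1) by (intro exI[of _ "\<Sum>c\<in>Basis. B c"]) (auto intro: sum_nonneg)
qed

lemma lipschitz_fderiv_smooth_compact_support:
  fixes f :: "'a::euclidean_space \<Rightarrow> real"
  assumes "smooth_fun f" "compact_support f"
  shows "\<exists>L\<ge>0. \<forall>p q v. \<bar>fderiv f p v - fderiv f q v\<bar> \<le> L * norm v * norm (p - q)"
proof -
  have "\<exists>L\<ge>0. \<forall>p q. \<bar>fderiv f p b - fderiv f q b\<bar> \<le> L * norm (p - q)" for b
    using assms by (intro lipschitz_smooth_compact_support
        smooth_fun_directional_derivative compact_support_directional_derivative)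
  then obtain L where L: "\<And>b. 0 \<le> L b" "\<And>b p q. \<bar>fderiv f p b - fderiv f q b\<bar> \<le> L b * norm (p - q)"
    by metis
  have "\<bar>fderiv f p v - fderiv f q v\<bar> \<le> (\<Sum>b\<in>Basis. L b) * norm (p - q) * norm v" for p q v
  proof -
    have "linear (\<lambda>v. fderiv f p v - fderiv f q v)"
      using smooth_fun_has_derivative[OF assms(1)] by (intro linear_compose_sub has_derivative_linear)
    then have "\<bar>fderiv f p v - fderiv f q v\<bar> \<le> (\<Sum>b\<in>Basis. L b * norm (p - q)) * norm v"
      by (rule abs_linear_le) (rule L(2))
    then show ?thesis by (simp add: sum_distrib_right)
  qed
  then show ?thesis using L(1) by (intro exI[of _ "\<Sum>b\<in>Basis. L b"]) (auto intro: sum_nonneg simp: mult_ac)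
qed

lemma second_difference_le:
  fixes f :: "'a::real_normed_vector \<Rightarrow> real"
  assumes f': "\<And>x. (f has_derivative f' x) (at x)"
    and L: "0 \<le> L" "\<And>p q v. \<bar>f' p v - f' q v\<bar> \<le> L * norm v * norm (p - q)"
  shows "\<bar>f (p + v) + f (p - v) - 2 * f p\<bar> \<le> 2 * L * (norm v)\<^sup>2"
proof -
  define g where "g t = f (p + t *\<^sub>R v) + f (p - t *\<^sub>R v)" for t :: real
  define g' where "g' t s = s * (f' (p + t *\<^sub>R v) v - f' (p - t *\<^sub>R v) v)" for t s :: real
  have "(g has_derivative g' t) (at t)" for t
  proof -
    have "linear (f' x)" for x using f' has_derivative_linear by blast
    then have "f' (p + t *\<^sub>R v) (s *\<^sub>R v) + f' (p - t *\<^sub>R v) (- (s *\<^sub>R v)) = g' t s" for s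
      by (simp add: g'_def linear_cmul linear_neg algebra_simps)
    moreover have "(g has_derivative (\<lambda>s. f' (p + t *\<^sub>R v) (s *\<^sub>R v) + f' (p - t *\<^sub>R v) (- (s *\<^sub>R v)))) (at t)"
      unfolding g_def
      by (intro has_derivative_add has_derivative_compose[OF _ f']) (auto intro!: derivative_eq_intros)
    ultimately show ?thesis by (simp add: fun_eq_iff)
  qed
  moreover have "onorm (g' t) \<le> 2 * L * (norm v)\<^sup>2" if "t \<in> {0..1}" for t
  proof (rule onorm_le)
    fix s
    have "norm (g' t s) \<le> \<bar>s\<bar> * (L * norm v * (2 * t * norm v))"
      using L(2)[of "p + t *\<^sub>R v" v "p - t *\<^sub>R v"] that
      by (auto simp: g'_def abs_mult scaleR_2[symmetric] intro!: mult_left_mono)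
    also have "\<dots> = \<bar>s\<bar> * (t * (2 * L * (norm v)\<^sup>2))"
      by (simp add: power2_eq_square algebra_simps)
    also have "\<dots> \<le> \<bar>s\<bar> * (2 * L * (norm v)\<^sup>2)"
      using that L(1) by (intro mult_left_mono mult_left_le_one_le) auto
    finally show "norm (g' t s) \<le> 2 * L * (norm v)\<^sup>2 * norm s" by (simp add: mult.commute)
  qed
  ultimately have "norm (g 1 - g 0) \<le> 2 * L * (norm v)\<^sup>2 * norm (1 - (0::real))"
    by (intro differentiable_bound[of "{0..1}"]) (auto intro: has_derivative_at_withinI)
  then show ?thesis by (simp add: g_def)
qed

section \<open>Lebesgue integrals on \<open>\<real>\<^sup>n\<close>\<close>

lemma integral_lborel_affine_isometry:
  fixes f :: "'a::euclidean_space \<Rightarrow> real"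
  assumes "\<bar>t\<bar> = 1" "f \<in> borel_measurable borel"
  shows "(LINT y|lborel. f y) = (LINT z|lborel. f (c + t *\<^sub>R z))"
proof -
  have "distr lborel borel (\<lambda>z. c + t *\<^sub>R z) = (lborel :: 'a measure)"
    using lborel_affine[of t c] assms(1) by (auto simp: density_1)
  then have "(LINT y|lborel. f y) = integral\<^sup>L (distr lborel borel (\<lambda>z. c + t *\<^sub>R z)) f"
    by simp
  also have "\<dots> = (LINT z|lborel. f (c + t *\<^sub>R z))"
    by (rule integral_distr) (use assms(2) in auto)
  finally show ?thesis .
qed

lemma dyadic_shell:
  fixes R t :: real
  assumes "0 < t" "t \<le> R"
  shows "\<exists>j. R / 2 ^ Suc j < t \<and> t \<le> R / 2 ^ j"
proof -
  obtain m where "R / t < 2 ^ m" using real_arch_pow[of 2 "R / t"] by auto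
  then have "R / 2 ^ m < t" using assms(1) by (simp add: field_simps)
  then obtain k where k: "R / 2 ^ k < t" "\<And>i. i < k \<Longrightarrow> \<not> R / 2 ^ i < t"
    using ex_least_nat_le[of "\<lambda>j. R / 2 ^ j < t"] assms by blast
  then obtain j where "k = Suc j"
    using assms(2) by (cases k) auto
  then show ?thesis using k by (intro exI[of _ j]) (auto simp: not_less)
qed

lemma nn_integral_norm_powr_shell_le:
  fixes r q :: real
  assumes "0 < r" "q \<le> 0"
  shows "(\<integral>\<^sup>+ z. ennreal (indicator (cball 0 r - cball 0 (r / 2)) z * norm (z::'a::euclidean_space) powr q) \<partial>lborel)
    \<le> ennreal ((2 powr - q * unit_ball_vol DIM('a)) * r powr (q + DIM('a)))"
proof -
  define A where "A = cball (0::'a) r - cball 0 (r / 2)"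
  have "(\<integral>\<^sup>+ z. ennreal (indicator A z * norm z powr q) \<partial>lborel)
      \<le> (\<integral>\<^sup>+ z. ennreal ((r / 2) powr q) * indicator A z \<partial>lborel)"
  proof (rule nn_integral_mono)
    fix z :: 'a
    have "norm z powr q \<le> (r / 2) powr q" if "z \<in> A"
      using that assms by (intro powr_mono2') (auto simp: A_def)
    then show "ennreal (indicator A z * norm z powr q) \<le> ennreal ((r / 2) powr q) * indicator A z"
      by (cases "z \<in> A") auto
  qed
  also have "\<dots> = ennreal ((r / 2) powr q) * emeasure lborel A"
    by (rule nn_integral_cmult_indicator) (simp add: A_def)
  also have "\<dots> \<le> ennreal ((r / 2) powr q) * emeasure lborel (cball (0::'a) r)"
    by (intro mult_left_mono emeasure_mono) (auto simp: A_def)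
  also have "\<dots> = ennreal ((r / 2) powr q * (unit_ball_vol DIM('a) * r ^ DIM('a)))"
    using assms(1) by (simp add: emeasure_cball ennreal_mult'' unit_ball_vol_nonneg)
  also have "\<dots> = ennreal ((2 powr - q * unit_ball_vol DIM('a)) * r powr (q + DIM('a)))"
  proof -
    have "r powr (q + DIM('a)) = r powr q * r ^ DIM('a)"
      using assms(1) unfolding powr_add by (simp add: powr_realpow)
    moreover have "(r / 2) powr q = 2 powr - q * r powr q"
      unfolding powr_divide powr_minus by (simp add: divide_inverse mult.commute)
    ultimately show ?thesis by (simp add: mult_ac)
  qed
  finally show ?thesis by (simp add: A_def)
qed

lemma ennreal_norm_powr_le_suminf_annuli:
  fixes z :: "'a::real_normed_vector"
  shows "ennreal (indicator (cball 0 R) z * norm z powr q)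
    \<le> (\<Sum>j. ennreal (indicator (cball 0 (R / 2 ^ j) - cball 0 (R / 2 ^ j / 2)) z * norm z powr q))"
proof (cases "z \<in> cball 0 R \<and> z \<noteq> 0")
  case True
  then obtain j where "R / 2 ^ Suc j < norm z" "norm z \<le> R / 2 ^ j"
    using dyadic_shell[of "norm z" R] by auto
  then have "ennreal (indicator (cball 0 R) z * norm z powr q)
      = ennreal (indicator (cball 0 (R / 2 ^ j) - cball 0 (R / 2 ^ j / 2)) z * norm z powr q)"
    using True by (simp add: indicator_def not_le mult.commute)
  also have "\<dots> \<le> (\<Sum>j. ennreal (indicator (cball 0 (R / 2 ^ j) - cball 0 (R / 2 ^ j / 2)) z * norm z powr q))"
    using sum_le_suminf[OF summableI, of "{j}"] by simp
  finally show ?thesis .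
next
  case False
  then have "indicator (cball 0 R) z * norm z powr q = 0" by (auto simp: indicator_def)
  then show ?thesis by (simp only: ennreal_0 zero_le)
qed

lemma integrable_norm_powr_cball:
  fixes q R :: real
  assumes "- real DIM('a) < q" "0 < R"
  shows "integrable lborel (\<lambda>z::'a::euclidean_space. indicator (cball 0 R) z * norm z powr q)"
proof (cases "0 \<le> q")
  case True
  show ?thesis
  proof (rule Bochner_Integration.integrable_bound)
    show "integrable lborel (\<lambda>z::'a. indicator (cball 0 R) z * R powr q)"
      using emeasure_lborel_cball_finite[of "0::'a" R]
      by (intro integrable_mult_left integrable_real_indicator) (auto simp: top_unique)
    show "AE z in lborel. norm (indicator (cball 0 R) z * norm z powr q) \<le> norm (indicator (cball 0 R) z * R powr q)"
      using True assms(2) by (auto simp: indicator_def intro!: powr_mono2)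
  qed (intro borel_measurable_times borel_measurable_indicator powr_real_measurable; simp)
next
  case False
  define A where "A j = cball (0::'a) (R / 2 ^ j) - cball 0 (R / 2 ^ j / 2)" for j :: nat
  define c where "c = 2 powr - q * unit_ball_vol DIM('a) * R powr (q + DIM('a))"
  define x where "x = 1 / 2 powr (q + DIM('a))"
  have x: "0 \<le> x" "x < 1" using assms(1) by (auto simp: x_def)
  have annulus: "(\<integral>\<^sup>+ z. ennreal (indicator (A j) z * norm z powr q) \<partial>lborel) \<le> ennreal (c * x ^ j)" for j
  proof -
    have "((2::real) ^ j) powr (q + DIM('a)) = (2 powr (q + DIM('a))) ^ j"
      by (simp add: powr_power powr_realpow[symmetric] powr_powr mult.commute)
    then have "(R / 2 ^ j) powr (q + DIM('a)) = R powr (q + DIM('a)) * x ^ j"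
      unfolding x_def powr_divide by (simp add: power_one_over)
    then show ?thesis
      using nn_integral_norm_powr_shell_le[where 'a = 'a, of "R / 2 ^ j" q] assms(2) False
      by (simp add: A_def c_def mult_ac)
  qed
  have "(\<integral>\<^sup>+ z. ennreal (indicator (cball 0 R) (z::'a) * norm z powr q) \<partial>lborel)
      \<le> (\<integral>\<^sup>+ z. (\<Sum>j. ennreal (indicator (A j) z * norm z powr q)) \<partial>lborel)"
    unfolding A_def by (rule nn_integral_mono) (rule ennreal_norm_powr_le_suminf_annuli)
  also have "\<dots> = (\<Sum>j. \<integral>\<^sup>+ z. ennreal (indicator (A j) z * norm z powr q) \<partial>lborel)"
    by (rule nn_integral_suminf) (intro measurable_compose[OF _ measurable_ennreal]
        borel_measurable_times borel_measurable_indicator powr_real_measurable; simp add: A_def)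
  also have "\<dots> \<le> (\<Sum>j. ennreal (c * x ^ j))"
    by (intro suminf_le annulus summableI)
  also have "\<dots> = ennreal (\<Sum>j. c * x ^ j)"
    using x by (intro suminf_ennreal2 summable_mult summable_geometric)
      (auto simp: c_def unit_ball_vol_nonneg)
  also have "\<dots> < \<infinity>" by simp
  finally show ?thesis
    by (intro integrableI_nonneg AE_I2 borel_measurable_times borel_measurable_indicator
        powr_real_measurable) simp_all
qed

section \<open>The discrete and the continuous kernel\<close>

lemma weight_eq_lattice_sum:
  fixes \<psi> :: "int^'n \<Rightarrow> real" and \<Phi> :: "(real^'n) \<times> (real^'n) \<Rightarrow> real"
  assumes "0 < h"
    and hyp: "\<And>\<phi>. \<phi> \<in> Cc \<Longrightarrow>
           (\<Sum>\<^sub>\<infinity>k. h ^ CARD('n) * (\<phi> (latt h k) * \<psi> k))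
         = (\<Sum>\<^sub>\<infinity>(k, j)\<in>{(k, j). k \<noteq> j}.
              h ^ (2 * CARD('n)) * (\<phi> (latt h k) * \<Phi> (latt h k, latt h j))
                / norm (latt h k - latt h j) powr e)"
  shows "\<psi> k = h ^ CARD('n) *
    (\<Sum>\<^sub>\<infinity>m\<in>{m. m \<noteq> 0}. \<Phi> (latt h k, latt h k + latt h m) / norm (latt h m) powr e)"
proof -
  obtain \<phi> where \<phi>: "\<phi> \<in> Cc" "\<And>j. \<phi> (latt h j) = (if j = k then 1 else 0)"
    using Cc_latt_indicator[OF assms(1)] by metis
  define G where "G j = \<Phi> (latt h k, latt h j) / norm (latt h k - latt h j) powr e" for j
  have "(\<Sum>\<^sub>\<infinity>k'. h ^ CARD('n) * (\<phi> (latt h k') * \<psi> k')) = (\<Sum>\<^sub>\<infinity>k'\<in>{k}. h ^ CARD('n) * \<psi> k')"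
    by (rule infsum_cong_neutral) (auto simp: \<phi>(2))
  then have lhs: "(\<Sum>\<^sub>\<infinity>k'. h ^ CARD('n) * (\<phi> (latt h k') * \<psi> k')) = h ^ CARD('n) * \<psi> k"
    by simp
  have "(\<Sum>\<^sub>\<infinity>(k', j)\<in>{(k', j). k' \<noteq> j}.
        h ^ (2 * CARD('n)) * (\<phi> (latt h k') * \<Phi> (latt h k', latt h j)) / norm (latt h k' - latt h j) powr e)
      = (\<Sum>\<^sub>\<infinity>kj\<in>Pair k ` {j. j \<noteq> k}. h ^ (2 * CARD('n)) * G (snd kj))"
    by (rule infsum_cong_neutral) (auto simp: \<phi>(2) G_def)
  also have "\<dots> = (\<Sum>\<^sub>\<infinity>j\<in>{j. j \<noteq> k}. h ^ (2 * CARD('n)) * G j)"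
    by (subst infsum_reindex) (auto simp: inj_on_def o_def)
  also have "\<dots> = h ^ (2 * CARD('n)) * (\<Sum>\<^sub>\<infinity>j\<in>{j. j \<noteq> k}. G j)"
    by (rule infsum_cmult_right')
  also have "(\<Sum>\<^sub>\<infinity>j\<in>{j. j \<noteq> k}. G j) = (\<Sum>\<^sub>\<infinity>m\<in>{m. m \<noteq> 0}. G (k + m))"
    by (rule infsum_reindex_bij_betw[symmetric]) (rule bij_betwI[where g = "\<lambda>j. j - k"]; auto)
  finally have "h ^ CARD('n) * \<psi> k = h ^ CARD('n) * (h ^ CARD('n) * (\<Sum>\<^sub>\<infinity>m\<in>{m. m \<noteq> 0}. G (k + m)))"
    using hyp[OF \<phi>(1)] lhs by (simp add: mult_2 power_add)
  then show ?thesis using assms(1) by (simp add: G_def latt_add)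
qed

locale frac_lap_kernel =
  fixes \<alpha> :: real and \<Phi> :: "(real^'n) \<times> (real^'n) \<Rightarrow> real" and R0 C :: real and s :: real
  defines "s \<equiv> real CARD('n) + \<alpha>"
  assumes alpha: "0 < \<alpha>" "\<alpha> < 2"
    and continuous: "continuous_on UNIV \<Phi>"
    and R0: "0 \<le> R0" and support: "\<And>p. \<Phi> p \<noteq> 0 \<Longrightarrow> norm p \<le> R0"
    and C: "0 \<le> C" and second_difference: "\<And>a b. \<bar>\<Phi> (a, a + b) + \<Phi> (a, a - b)\<bar> \<le> C * (norm b)\<^sup>2"
    and diagonal: "\<And>x. \<Phi> (x, x) = 0"
begin

definition even_part :: "real^'n \<Rightarrow> real^'n \<Rightarrow> real" where
  "even_part x z = (\<Phi> (x, x + z) + \<Phi> (x, x - z)) / 2"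

definition kernel :: "real^'n \<Rightarrow> real^'n \<Rightarrow> real" where
  "kernel x z = even_part x z / norm z powr s"

text \<open>The cube of the origin gets weight \<open>0\<close>, matching the exclusion of the diagonal
  \<open>k = j\<close> from the lattice sum.\<close>
definition step_kernel :: "real \<Rightarrow> real^'n \<Rightarrow> real^'n \<Rightarrow> real" where
  "step_kernel h x z = (if cube_index h z = 0 then 0 else kernel x (latt h (cube_index h z)))"

text \<open>The second-difference bound gives \<open>|kernel a b| \<le> C |b| powr (2 - s)\<close>, and \<open>|b| \<le> 2 R0\<close>
  wherever the kernel is nonzero. This is at most the first summand if \<open>s \<le> 2\<close>, and at most
  the second if \<open>|z| \<le> (1 + n) |b|\<close>, as for the lattice point \<open>b\<close> of the cube containing \<open>z\<close>.\<close>
definition dominant :: "real^'n \<Rightarrow> real" where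
  "dominant z = indicator (cball 0 (2 * R0 + CARD('n))) z *
     (C * ((2 * R0) powr (2 - s) + (1 + real CARD('n)) powr (s - 2) * norm z powr (2 - s)))"

lemma s_pos: "0 < s"
  using alpha by (simp add: s_def)

lemma norm_le_if_Phi_nonzero: "\<Phi> (a, c) \<noteq> 0 \<Longrightarrow> norm a \<le> R0 \<and> norm c \<le> R0"
  using support[of "(a, c)"] norm_fst_le[of a c] norm_snd_le[of c a] by auto

lemma norm_le_if_even_part_nonzero:
  assumes "even_part a b \<noteq> 0" shows "norm b \<le> 2 * R0"
proof -
  have "\<Phi> (a, a + b) \<noteq> 0 \<or> \<Phi> (a, a - b) \<noteq> 0" using assms by (auto simp: even_part_def)
  then have "norm a \<le> R0 \<and> (norm (a + b) \<le> R0 \<or> norm (a - b) \<le> R0)"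
    using norm_le_if_Phi_nonzero by blast
  moreover have "norm b \<le> norm a + norm (a + b)" "norm b \<le> norm a + norm (a - b)"
    using norm_triangle_ineq4[of "a + b" a] norm_triangle_ineq4[of a "a - b"] by simp_all
  ultimately show ?thesis by linarith
qed

lemma Phi_bounded: "\<exists>M\<ge>0. \<forall>p. \<bar>\<Phi> p\<bar> \<le> M"
proof (rule bounded_compact_support[OF continuous])
  have "{p. \<Phi> p \<noteq> 0} \<subseteq> cball 0 R0" using support by auto
  then show "compact_support \<Phi>"
    by (simp add: compact_support_def compact_closure bounded_subset[OF bounded_cball])
qed

lemma isCont_Phi: "isCont \<Phi> p"
  by (metis continuous continuous_on_eq_continuous_at open_UNIV UNIV_I)

lemma continuous_on_even_part: "continuous_on UNIV (even_part x)"
  unfolding even_part_def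
  by (intro continuous_intros continuous_on_compose2[OF continuous]) auto

lemma borel_measurable_kernel: "kernel x \<in> borel_measurable borel"
  unfolding kernel_def[abs_def]
  by (intro borel_measurable_divide borel_measurable_continuous_onI[OF continuous_on_even_part]
      powr_real_measurable borel_measurable_norm) auto

lemma borel_measurable_step_kernel: "0 < h \<Longrightarrow> step_kernel h x \<in> borel_measurable lborel"
  unfolding step_kernel_def
  using borel_measurable_step[of h "\<lambda>m. if m = 0 then 0 else kernel x (latt h m)"] by simp

lemma dominant_nonneg: "0 \<le> dominant z"
  using C by (simp add: dominant_def)

lemma integrable_dominant: "integrable lborel dominant"
proof -
  let ?R = "2 * R0 + CARD('n)"
  have "integrable lborel (\<lambda>z::real^'n. indicator (cball 0 ?R) z * norm z powr (2 - s))"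
    using alpha R0 by (intro integrable_norm_powr_cball) (auto simp: s_def card_gt_0_iff add_nonneg_pos)
  moreover have "integrable lborel (\<lambda>z::real^'n. indicat_real (cball 0 ?R) z)"
    using emeasure_lborel_cball_finite[of "0::real^'n" ?R]
    by (intro integrable_real_indicator) (auto simp: top_unique)
  moreover have "dominant = (\<lambda>z. C * (2 * R0) powr (2 - s) * indicator (cball 0 ?R) z +
      C * (1 + real CARD('n)) powr (s - 2) * (indicator (cball 0 ?R) z * norm z powr (2 - s)))"
    unfolding dominant_def by (intro ext) (simp add: ring_distribs mult_ac)
  ultimately show ?thesis by simp
qed

lemma abs_kernel_le_dominant:
  assumes "z \<noteq> 0" "norm z \<le> (1 + real CARD('n)) * norm b" "norm z \<le> 2 * R0 + CARD('n)"
  shows "\<bar>kernel a b\<bar> \<le> dominant z"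
proof (cases "even_part a b = 0")
  case False
  let ?N = "1 + real CARD('n)"
  have b: "0 < norm b" "norm b \<le> 2 * R0"
    using assms(1,2) norm_le_if_even_part_nonzero[OF False] by auto
  have "\<bar>even_part a b\<bar> \<le> C * (norm b)\<^sup>2"
    using second_difference[of a b] C by (simp add: even_part_def)
  then have "\<bar>kernel a b\<bar> \<le> C * (norm b)\<^sup>2 / norm b powr s"
    by (simp add: kernel_def divide_right_mono)
  also have "\<dots> = C * norm b powr (2 - s)"
  proof -
    have "norm b powr (2 - s) = norm b powr 2 / norm b powr s" by (rule powr_diff)
    also have "norm b powr 2 = (norm b)\<^sup>2" using b by (simp add: powr_numeral)
    finally show ?thesis by simp
  qed
  also have "norm b powr (2 - s) \<le> (2 * R0) powr (2 - s) + ?N powr (s - 2) * norm z powr (2 - s)"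
  proof (cases "0 \<le> 2 - s")
    case True
    then have "norm b powr (2 - s) \<le> (2 * R0) powr (2 - s)" using b by (intro powr_mono2) auto
    then show ?thesis by (simp add: add_increasing2)
  next
    case False
    have "norm z / ?N \<le> norm b" using assms(2) by (simp add: divide_le_eq mult.commute)
    then have "norm b powr (2 - s) \<le> (norm z / ?N) powr (2 - s)"
      using False assms(1) by (intro powr_mono2') auto
    also have "\<dots> = ?N powr (s - 2) * norm z powr (2 - s)"
    proof -
      have "?N powr (s - 2) = inverse (?N powr (2 - s))" using powr_minus[of ?N "2 - s"] by simp
      then show ?thesis unfolding powr_divide by (simp add: divide_inverse mult.commute)
    qed
    finally show ?thesis by (simp add: add_increasing)
  qed
  then have "C * norm b powr (2 - s) \<le> C * ((2 * R0) powr (2 - s) + ?N powr (s - 2) * norm z powr (2 - s))"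
    using C by (rule mult_left_mono)
  finally show ?thesis using assms(3) by (simp add: dominant_def)
qed (simp add: kernel_def dominant_nonneg)

lemma abs_kernel_le: "\<bar>kernel x z\<bar> \<le> dominant z"
proof (cases "z = 0")
  case False
  have "norm z \<le> 2 * R0 + CARD('n)" if "even_part x z \<noteq> 0"
    using norm_le_if_even_part_nonzero[OF that] by simp
  then show ?thesis
    using abs_kernel_le_dominant[OF False, of z x] dominant_nonneg
    by (cases "even_part x z = 0") (auto simp: kernel_def algebra_simps)
qed (simp add: kernel_def dominant_nonneg)

lemma abs_step_kernel_le:
  assumes "0 < h" "h < 1" shows "\<bar>step_kernel h x z\<bar> \<le> dominant z"
proof (cases "cube_index h z = 0 \<or> even_part x (latt h (cube_index h z)) = 0")
  case False
  define b where "b = latt h (cube_index h z)"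
  have "h \<le> norm b" using False assms(1) by (auto simp: b_def intro: norm_latt_ge)
  moreover have "norm b \<le> 2 * R0" using False norm_le_if_even_part_nonzero by (auto simp: b_def)
  moreover have "norm z \<le> norm b + real CARD('n) * h"
    using norm_latt_cube_index_le[OF assms(1), of z] norm_triangle_ineq4[of b "b - z"]
    by (simp add: b_def)
  moreover have "real CARD('n) * h \<le> real CARD('n) * norm b" "real CARD('n) * h \<le> real CARD('n)"
    using assms \<open>h \<le> norm b\<close> by (simp_all add: mult_left_mono)
  moreover have "(1 + real CARD('n)) * norm b = norm b + real CARD('n) * norm b"
    by (simp add: algebra_simps)
  moreover have "z \<noteq> 0"
  proof
    assume "z = 0"
    then have "cube_index h z = 0" by (simp add: cube_index_def vec_eq_iff)
    then show False using False by simp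
  qed
  ultimately have "\<bar>kernel x b\<bar> \<le> dominant z"
    by (intro abs_kernel_le_dominant) linarith+
  then show ?thesis using False by (simp add: step_kernel_def b_def)
qed (auto simp: step_kernel_def kernel_def dominant_nonneg)

lemma integrable_step_kernel: "0 < h \<Longrightarrow> h < 1 \<Longrightarrow> integrable lborel (step_kernel h x)"
  by (rule Bochner_Integration.integrable_bound[OF integrable_dominant borel_measurable_step_kernel])
    (use abs_step_kernel_le dominant_nonneg in auto)

lemma step_kernel_tendsto:
  assumes S: "\<And>n. 0 < S n" "S \<longlonglongrightarrow> 0" and a: "a \<longlonglongrightarrow> x" and "z \<noteq> 0"
  shows "(\<lambda>n. step_kernel (S n) (a n) z) \<longlonglongrightarrow> kernel x z"
proof -
  define b where "b n = latt (S n) (cube_index (S n) z)" for n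
  have b: "b \<longlonglongrightarrow> z" unfolding b_def by (rule tendsto_latt_cube_index[OF S])
  have "(\<lambda>n. kernel (a n) (b n)) \<longlonglongrightarrow> kernel x z"
    unfolding kernel_def even_part_def using \<open>z \<noteq> 0\<close>
    by (intro tendsto_intros isCont_tendsto_compose[OF isCont_Phi] a b) auto
  moreover have "\<forall>\<^sub>F n in sequentially. kernel (a n) (b n) = step_kernel (S n) (a n) z"
    using tendsto_imp_eventually_ne[OF b \<open>z \<noteq> 0\<close>]
    by eventually_elim (auto simp: step_kernel_def b_def latt_zero)
  ultimately show ?thesis by (rule Lim_transform_eventually)
qed

lemma integral_step_kernel_tendsto:
  assumes S: "\<And>n. 0 < S n" "\<And>n. S n < 1" "S \<longlonglongrightarrow> 0" and a: "a \<longlonglongrightarrow> x"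
  shows "(\<lambda>n. LINT z|lborel. step_kernel (S n) (a n) z) \<longlonglongrightarrow> (LINT z|lborel. kernel x z)"
proof (rule integral_dominated_convergence[where w = dominant])
  show "AE z in lborel. (\<lambda>n. step_kernel (S n) (a n) z) \<longlonglongrightarrow> kernel x z"
    using AE_lborel_singleton[of 0] by eventually_elim (rule step_kernel_tendsto[OF S(1,3) a])
  show "AE z in lborel. norm (step_kernel (S n) (a n) z) \<le> dominant z" for n
    using abs_step_kernel_le[OF S(1,2)] by simp
qed (use borel_measurable_kernel borel_measurable_step_kernel S(1) integrable_dominant in auto)

lemma integral_step_kernel:
  assumes "0 < h"
  shows "(LINT z|lborel. step_kernel h a z)
    = h ^ CARD('n) * (\<Sum>\<^sub>\<infinity>m\<in>{m. m \<noteq> 0}. \<Phi> (a, a + latt h m) / norm (latt h m) powr s)"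
proof -
  define P where "P m = \<Phi> (a, a + latt h m) / norm (latt h m) powr s" for m
  define T where "T = {m :: int^'n. m \<noteq> 0 \<and> norm (latt h m) \<le> 2 * R0}"
  have T: "finite T" by (rule finite_subset[OF _ finite_latt_cball[OF assms]]) (auto simp: T_def)
  have "P m = 0" if "m \<noteq> 0" "m \<notin> T" for m :: "int^'n"
  proof (rule ccontr)
    assume "P m \<noteq> 0"
    then have "norm a \<le> R0" "norm (a + latt h m) \<le> R0"
      using norm_le_if_Phi_nonzero by (auto simp: P_def)
    then have "norm (latt h m) \<le> 2 * R0"
      using norm_triangle_ineq4[of "a + latt h m" a] by simp
    then show False using that by (simp add: T_def)
  qed
  then have "(\<Sum>\<^sub>\<infinity>m\<in>{m. m \<noteq> 0}. P m) = (\<Sum>m\<in>T. P m)"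
    using T by (subst infsum_cong_neutral[where T = T]) (auto simp: T_def)
  also have "\<dots> = (\<Sum>m\<in>T. (P m + P (- m)) / 2)"
  proof -
    have "(\<Sum>m\<in>T. P (- m)) = (\<Sum>m\<in>T. P m)"
      by (rule sum.reindex_bij_witness[where i = uminus and j = uminus]) (auto simp: T_def latt_minus)
    then show ?thesis by (simp add: sum.distrib sum_divide_distrib[symmetric])
  qed
  finally have sum_P: "(\<Sum>\<^sub>\<infinity>m\<in>{m. m \<noteq> 0}. P m) = (\<Sum>m\<in>T. (P m + P (- m)) / 2)" .
  define g where "g m = (if m = 0 then 0 else kernel a (latt h m))" for m :: "int^'n"
  have "g m = 0" if "m \<notin> T" for m
    using that norm_le_if_even_part_nonzero[of a "latt h m"] by (auto simp: g_def T_def kernel_def)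
  then have "(LINT z|lborel. g (cube_index h z)) = h ^ CARD('n) * (\<Sum>m\<in>T. g m)"
    by (intro has_bochner_integral_integral_eq has_bochner_integral_step assms T)
  moreover have "g m = (P m + P (- m)) / 2" if "m \<in> T" for m
    using that by (simp add: g_def T_def P_def kernel_def even_part_def latt_minus add_divide_distrib)
  ultimately show ?thesis
    unfolding sum_P P_def[symmetric] step_kernel_def g_def[symmetric] by simp
qed

lemma weight_eq_integral_step_kernel:
  fixes \<psi> :: "int^'n \<Rightarrow> real"
  assumes "0 < h"
    and "\<And>\<phi>. \<phi> \<in> Cc \<Longrightarrow>
           (\<Sum>\<^sub>\<infinity>k. h ^ CARD('n) * (\<phi> (latt h k) * \<psi> k))
         = (\<Sum>\<^sub>\<infinity>(k, j)\<in>{(k, j). k \<noteq> j}.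
              h ^ (2 * CARD('n)) * (\<phi> (latt h k) * \<Phi> (latt h k, latt h j))
                / norm (latt h k - latt h j) powr (real CARD('n) + \<alpha>))"
  shows "\<psi> k = (LINT z|lborel. step_kernel h (latt h k) z)"
  using weight_eq_lattice_sum[OF assms] integral_step_kernel[OF assms(1)] by (simp add: s_def)

lemma borel_measurable_truncated:
  "(\<lambda>z. indicator {z. \<epsilon> < norm z} z * (\<Phi> (x, x + t *\<^sub>R z) / norm z powr s)) \<in> borel_measurable borel"
proof -
  have "{z::real^'n. \<epsilon> < norm z} \<in> sets borel"
    by (intro borel_open open_Collect_less continuous_intros)
  then show ?thesis
    by (intro borel_measurable_times borel_measurable_indicator borel_measurable_divide
        borel_measurable_continuous_onI continuous_on_compose2[OF continuous] powr_real_measurable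
        borel_measurable_norm) (auto intro!: continuous_intros)
qed

lemma integrable_truncated:
  assumes "0 < \<epsilon>" "\<bar>t\<bar> = 1"
  shows "integrable lborel (\<lambda>z. indicator {z. \<epsilon> < norm z} z * (\<Phi> (x, x + t *\<^sub>R z) / norm z powr s))"
proof -
  obtain M where M: "0 \<le> M" "\<And>p. \<bar>\<Phi> p\<bar> \<le> M" using Phi_bounded by blast
  have bound: "norm (indicator {z. \<epsilon> < norm z} z * (\<Phi> (x, x + t *\<^sub>R z) / norm z powr s))
      \<le> norm (M / \<epsilon> powr s * indicat_real (cball 0 (2 * R0)) z)" for z :: "real^'n"
  proof (cases "\<epsilon> < norm z \<and> \<Phi> (x, x + t *\<^sub>R z) \<noteq> 0")
    case True
    then have "norm x \<le> R0" "norm (x + t *\<^sub>R z) \<le> R0"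
      using norm_le_if_Phi_nonzero by blast+
    then have "norm z \<le> 2 * R0"
      using norm_triangle_ineq4[of "x + t *\<^sub>R z" x] assms(2) by simp
    moreover have "\<epsilon> powr s \<le> norm z powr s"
      using True assms(1) s_pos by (intro powr_mono2) auto
    then have "\<bar>\<Phi> (x, x + t *\<^sub>R z)\<bar> / norm z powr s \<le> M / \<epsilon> powr s"
      using M assms(1) by (intro frac_le) auto
    ultimately show ?thesis using True M(1) by (simp add: indicator_def)
  qed (auto simp: indicator_def)
  show ?thesis
  proof (rule Bochner_Integration.integrable_bound)
    show "integrable lborel (\<lambda>z::real^'n. M / \<epsilon> powr s * indicat_real (cball 0 (2 * R0)) z)"
      using emeasure_lborel_cball_finite[of "0::real^'n" "2 * R0"]
      by (intro integrable_mult_right integrable_real_indicator) (auto simp: top_unique)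
  qed (use bound borel_measurable_truncated in simp_all)
qed

lemma truncated_integral_eq_translate:
  assumes "\<bar>t\<bar> = 1"
  shows "(LINT y:{y. dist x y > \<epsilon>}|lborel. (\<Phi> (x, y) - \<Phi> (x, x)) / norm (x - y) powr s)
    = (LINT z|lborel. indicator {z. \<epsilon> < norm z} z * (\<Phi> (x, x + t *\<^sub>R z) / norm z powr s))"
    (is "_ = (LINT z|lborel. ?f z)")
proof -
  have "t \<noteq> 0" "\<bar>inverse t\<bar> = 1" using assms by (auto simp: abs_inverse)
  then have "(LINT y:{y. dist x y > \<epsilon>}|lborel. (\<Phi> (x, y) - \<Phi> (x, x)) / norm (x - y) powr s)
      = (LINT y|lborel. ?f ((y - x) /\<^sub>R t))"
    unfolding set_lebesgue_integral_def
    by (intro Bochner_Integration.integral_cong)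
      (auto simp: diagonal dist_norm norm_minus_commute indicator_def)
  also have "\<dots> = (LINT z|lborel. ?f ((x + t *\<^sub>R z - x) /\<^sub>R t))"
    by (rule integral_lborel_affine_isometry[OF assms], rule measurable_compose[OF _ borel_measurable_truncated])
      (intro borel_measurable_continuous_onI continuous_intros)
  finally show ?thesis using assms by simp
qed

lemma truncated_integral_eq:
  assumes "0 < \<epsilon>"
  shows "(LINT y:{y. dist x y > \<epsilon>}|lborel. (\<Phi> (x, y) - \<Phi> (x, x)) / norm (x - y) powr s)
    = (LINT z|lborel. indicator {z. \<epsilon> < norm z} z * kernel x z)"
proof -
  define f where "f t z = indicator {z. \<epsilon> < norm z} z * (\<Phi> (x, x + t *\<^sub>R z) / norm z powr s)"
    for t and z :: "real^'n"
  have "(\<lambda>z. indicator {z. \<epsilon> < norm z} z * kernel x z) = (\<lambda>z. (f 1 z + f (-1) z) / 2)"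
    by (simp add: fun_eq_iff f_def kernel_def even_part_def add_divide_distrib ring_distribs)
  then have "(LINT z|lborel. indicator {z. \<epsilon> < norm z} z * kernel x z)
      = (LINT z|lborel. (f 1 z + f (-1) z) / 2)"
    by (rule arg_cong)
  also have "\<dots> = ((LINT z|lborel. f 1 z) + (LINT z|lborel. f (-1) z)) / 2"
    using integrable_truncated[OF assms, of 1] integrable_truncated[OF assms, of "-1"]
    by (simp add: f_def)
  also have "\<dots> = (LINT y:{y. dist x y > \<epsilon>}|lborel. (\<Phi> (x, y) - \<Phi> (x, x)) / norm (x - y) powr s)"
    using truncated_integral_eq_translate[of 1] truncated_integral_eq_translate[of "-1"]
    by (simp add: f_def)
  finally show ?thesis by (rule sym)
qed

lemma frac_lap_diag_eq: "frac_lap_diag \<alpha> \<Phi> x = (LINT z|lborel. kernel x z)"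
proof -
  have "((\<lambda>\<epsilon>. LINT z|lborel. indicator {z. \<epsilon> < norm z} z * kernel x z)
      \<longlongrightarrow> (LINT z|lborel. kernel x z)) (at_right 0)"
  proof (rule tendsto_at_right_sequentially[of 0 1])
    fix S :: "nat \<Rightarrow> real" assume S: "\<And>n. 0 < S n" "S \<longlonglongrightarrow> 0"
    show "(\<lambda>n. LINT z|lborel. indicator {z. S n < norm z} z * kernel x z) \<longlonglongrightarrow> (LINT z|lborel. kernel x z)"
    proof (rule integral_dominated_convergence[where w = dominant])
      show "AE z in lborel. (\<lambda>n. indicator {z. S n < norm z} z * kernel x z) \<longlonglongrightarrow> kernel x z"
        using AE_lborel_singleton[of 0]
      proof eventually_elim
        case (elim z)
        then have "\<forall>\<^sub>F n in sequentially. S n < norm z" by (intro order_tendstoD(2)[OF S(2)]) simp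
        then have "\<forall>\<^sub>F n in sequentially. indicator {z. S n < norm z} z * kernel x z = kernel x z"
          by eventually_elim simp
        then show ?case by (rule tendsto_eventually)
      qed
      show "AE z in lborel. norm (indicator {z. S n < norm z} z * kernel x z) \<le> dominant z" for n
        using abs_kernel_le dominant_nonneg by (simp add: indicator_def)
      have "{z::real^'n. S n < norm z} \<in> sets borel" for n
        by (intro borel_open open_Collect_less continuous_intros)
      then show "(\<lambda>z. indicator {z. S n < norm z} z * kernel x z) \<in> borel_measurable lborel" for n
        using borel_measurable_kernel by simp
    qed (use borel_measurable_kernel integrable_dominant in simp_all)
  qed simp
  then have "((\<lambda>\<epsilon>. LINT y:{y. dist x y > \<epsilon>}|lborel. (\<Phi> (x, y) - \<Phi> (x, x)) / norm (x - y) powr s)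
      \<longlongrightarrow> (LINT z|lborel. kernel x z)) (at_right 0)"
    by (rule Lim_transform_eventually)
      (use eventually_at_right_less[of 0] in \<open>eventually_elim, simp add: truncated_integral_eq\<close>)
  then show ?thesis
    unfolding frac_lap_diag_def s_def by (rule tendsto_Lim[OF trivial_limit_at_right_real])
qed

lemma tendsto_integral_Qpc:
  fixes \<psi> :: "real \<Rightarrow> int^'n \<Rightarrow> real" and \<phi> :: "real^'n \<Rightarrow> real"
  assumes weight: "\<And>h k. 0 < h \<Longrightarrow> h < 1 \<Longrightarrow> \<psi> h k = (LINT z|lborel. step_kernel h (latt h k) z)"
    and \<phi>: "\<phi> \<in> Cc"
  shows "((\<lambda>h. LINT x|lborel. Qpc (\<psi> h) h x * \<phi> x)
           \<longlongrightarrow> (LINT x|lborel. (LINT z|lborel. kernel x z) * \<phi> x)) (at_right 0)"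
proof (rule tendsto_at_right_sequentially[of 0 1])
  fix S :: "nat \<Rightarrow> real" assume S: "\<And>n. 0 < S n" "\<And>n. S n < 1" "S \<longlonglongrightarrow> 0"
  have Qpc: "Qpc (\<psi> (S n)) (S n) x = (LINT z|lborel. step_kernel (S n) (latt (S n) (cube_index (S n) x)) z)"
    for n and x :: "real^'n"
    using Qpc_eq[OF S(1), of "\<psi> (S n)"] weight[OF S(1,2)] by simp
  have meas: "(\<lambda>x. Qpc (\<psi> (S n)) (S n) x * \<phi> x) \<in> borel_measurable lborel" for n
    using borel_measurable_step[OF S(1), of "\<psi> (S n)"] borel_measurable_Cc[OF \<phi>]
    by (simp add: Qpc_eq[OF S(1)])
  have conv: "(\<lambda>n. Qpc (\<psi> (S n)) (S n) x * \<phi> x) \<longlonglongrightarrow> (LINT z|lborel. kernel x z) * \<phi> x" for x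
    unfolding Qpc
    by (intro tendsto_mult_right integral_step_kernel_tendsto[OF S] tendsto_latt_cube_index[OF S(1,3)])
  show "(\<lambda>n. LINT x|lborel. Qpc (\<psi> (S n)) (S n) x * \<phi> x) \<longlonglongrightarrow> (LINT x|lborel. (LINT z|lborel. kernel x z) * \<phi> x)"
  proof (rule integral_dominated_convergence[where w = "\<lambda>x. (LINT z|lborel. dominant z) * \<bar>\<phi> x\<bar>"])
    show "AE x in lborel. norm (Qpc (\<psi> (S n)) (S n) x * \<phi> x) \<le> (LINT z|lborel. dominant z) * \<bar>\<phi> x\<bar>" for n
      unfolding Qpc using Bochner_Integration.integral_norm_bound_integral[OF integrable_step_kernel[OF S(1,2)] integrable_dominant]
        abs_step_kernel_le[OF S(1,2)]
      by (intro AE_I2) (simp add: abs_mult mult_right_mono)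
  qed (use meas conv borel_measurable_LIMSEQ_real[OF conv meas] integrable_Cc[OF \<phi>] in simp_all)
qed simp

end

lemma frac_lap_kernel_if_Cc_inf:
  fixes \<Phi> :: "(real^'n) \<times> (real^'n) \<Rightarrow> real"
  assumes "0 < \<alpha>" "\<alpha> < 2" "\<Phi> \<in> Cc_inf" "\<And>x. \<Phi> (x, x) = 0"
  obtains R0 C where "frac_lap_kernel \<alpha> \<Phi> R0 C"
proof -
  have sm: "smooth_fun \<Phi>" and cs: "compact_support \<Phi>" using assms(3) by (auto simp: Cc_inf_def)
  have "bounded (closure {p. \<Phi> p \<noteq> 0})"
    using cs by (simp add: compact_support_def compact_imp_bounded)
  then obtain R where R: "\<And>p. p \<in> closure {p. \<Phi> p \<noteq> 0} \<Longrightarrow> norm p \<le> R"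
    unfolding bounded_iff by blast
  have support: "norm p \<le> max R 0" if "\<Phi> p \<noteq> 0" for p
  proof -
    have "p \<in> closure {p. \<Phi> p \<noteq> 0}" by (rule closure_subset[THEN subsetD]) (simp add: that)
    then have "norm p \<le> R" by (rule R)
    then show ?thesis by simp
  qed
  obtain L where L: "0 \<le> L" "\<And>p q v. \<bar>fderiv \<Phi> p v - fderiv \<Phi> q v\<bar> \<le> L * norm v * norm (p - q)"
    using lipschitz_fderiv_smooth_compact_support[OF sm cs] by blast
  have "\<bar>\<Phi> (a, a + b) + \<Phi> (a, a - b)\<bar> \<le> 2 * L * (norm b)\<^sup>2" for a b
  proof -
    have "norm (0 :: real^'n, b) = norm b" by (simp add: norm_Pair)
    moreover have "(a, a) + (0, b) = (a, a + b)" "(a, a) - (0, b) = (a, a - b)" by simp_all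
    ultimately show ?thesis
      using second_difference_le[OF smooth_fun_has_derivative[OF sm] L, of "(a, a)" "(0, b)"] assms(4)[of a]
      by (simp only:)
  qed
  then have "frac_lap_kernel \<alpha> \<Phi> (max R 0) (2 * L)"
    using assms(1,2,4) smooth_fun_continuous[OF sm] support L(1) by unfold_locales simp_all
  then show ?thesis by (rule that)
qed

theorem theorem10p3:
  fixes \<alpha> :: real
    and \<Phi> :: "(real^'n) \<times> (real^'n) \<Rightarrow> real"
    and \<psi> :: "real \<Rightarrow> int^'n \<Rightarrow> real"
    and \<phi> :: "real^'n \<Rightarrow> real"
  assumes "0 < \<alpha>" and "\<alpha> < 2"
    and "\<Phi> \<in> Cc_inf"
    and "\<And>x. \<Phi> (x, x) = 0"
    and "\<And>h \<phi>'. 0 < h \<Longrightarrow> h < 1 \<Longrightarrow> \<phi>' \<in> Cc \<Longrightarrow>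
           (\<Sum>\<^sub>\<infinity>k. h ^ CARD('n) * (\<phi>' (latt h k) * \<psi> h k))
         = (\<Sum>\<^sub>\<infinity>(k, j)\<in>{(k, j). k \<noteq> j}.
              h ^ (2 * CARD('n)) * (\<phi>' (latt h k) * \<Phi> (latt h k, latt h j))
                / norm (latt h k - latt h j) powr (real CARD('n) + \<alpha>))"
    and "\<phi> \<in> Cc"
  shows "((\<lambda>h. LINT x|lborel. Qpc (\<psi> h) h x * \<phi> x)
           \<longlongrightarrow> (LINT x|lborel. \<phi> x * frac_lap_diag \<alpha> \<Phi> x)) (at_right 0)"
proof -
  obtain R0 C where "frac_lap_kernel \<alpha> \<Phi> R0 C"
    using frac_lap_kernel_if_Cc_inf[OF assms(1-4)] .
  then interpret frac_lap_kernel \<alpha> \<Phi> R0 C "real CARD('n) + \<alpha>" by simp_all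
  have "\<psi> h k = (LINT z|lborel. step_kernel h (latt h k) z)" if "0 < h" "h < 1" for h k
    using weight_eq_integral_step_kernel[OF that(1) assms(5)[OF that]] .
  then have "((\<lambda>h. LINT x|lborel. Qpc (\<psi> h) h x * \<phi> x)
      \<longlongrightarrow> (LINT x|lborel. (LINT z|lborel. kernel x z) * \<phi> x)) (at_right 0)"
    by (rule tendsto_integral_Qpc[OF _ assms(6)])
  moreover have "(\<lambda>x. (LINT z|lborel. kernel x z) * \<phi> x) = (\<lambda>x. \<phi> x * frac_lap_diag \<alpha> \<Phi> x)"
    by (simp add: fun_eq_iff frac_lap_diag_eq)
  ultimately show ?thesis by simp
qed

end
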